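(* In the setting below (disjoint parameter spaces), let $\widehat\Xi_n=\sum_{m\in\mathcal{M}_n}\widehat\gamma_{n,m}\widehat\Xi_{n,m}$ with $\widehat\Xi_{n,m}\in\operatorname{argmin}_{\Xi\in\mathbb{V}_{n,m}}\mathcal{E}(\Xi,\Pi_{n,m},q_n,Y^{(n)})$ and $\widehat\gamma_{n,m}\propto\alpha_{n,m}\exp(-\mathcal{E}(\widehat\Xi_{n,m},\Pi_{n,m},q_n,Y^{(n)}))$ normalized to sum to one, and let $\widehat\alpha_{n,m}:=\Pi_n(\theta\in\Theta_{n,m}\mid Y^{(n)})$. Then $$\Big(\sum_{m\in\mathcal{M}_n}|\widehat\gamma_{n,m}-\widehat\alpha_{n,m}|\Big)^2\le 2\,\mathrm{KL}\big(\widehat\Xi_n,\Pi_n(\cdot\mid Y^{(n)})\big).$$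
   Context: Setting: $\mathfrak{Y}_n$ is a measurable space with $\sigma$-finite measure $\mu_n$; $q_n:\Lambda_n\times\mathfrak{Y}_n\to[0,\infty)$ is a likelihood ($\int q_n(\lambda,\cdot)d\mu_n=1$); $\mathcal{M}_n$ is countable; $\{\Theta_{n,m}\}_{m\in\mathcal{M}_n}$ are pairwise disjoint; $T_n:\bigcup_m\Theta_{n,m}\to\Lambda_n$ is measurable; prior $\Pi_n=\sum_m\alpha_{n,m}\Pi_{n,m}$ with $(\alpha_{n,m})$ a probability vector and $\Pi_{n,m}$ a probability measure on $\Theta_{n,m}$; $\mathbb{V}_{n,m}$ are sets of probability measures on $\Theta_{n,m}$. Posterior: $\Pi_n(\mathcal{T}\mid Y^{(n)})\propto\int_{\mathcal{T}}q_n(T_n(\theta),Y^{(n)})d\Pi_n(\theta)$. Objective: $\mathcal{E}(\Xi,\Pi,q_n,Y^{(n)})=-\int\log q_n(T_n(\theta),Y^{(n)})d\Xi(\theta)+\mathrm{KL}(\Xi,\Pi)$. *)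

theory Defs
  imports "HOL-Probability.Probability"
begin

text \<open>Kullback-Leibler divergence KL(P,Q) = integral of log(dP/dQ) dP if P is absolutely
  continuous w.r.t. Q, and infinity otherwise. dP/dQ is RN_deriv Q P. Where the density
  vanishes the log is minus infinity (only on a P-null set).\<close>
definition KL :: "'a measure \<Rightarrow> 'a measure \<Rightarrow> ereal" where
  "KL P Q =
    (if sets P = sets Q \<and> absolutely_continuous Q P then
       (let f = RN_deriv Q P in
          enn2ereal (\<integral>\<^sup>+ x. ennreal (max 0 (ln (enn2real (f x)))) \<partial>P)
        - enn2ereal (\<integral>\<^sup>+ x. (if f x = 0 then \<infinity> else ennreal (max 0 (- ln (enn2real (f x))))) \<partial>P))
     else \<infinity>)"

definition mixture :: "'t measure \<Rightarrow> 'm set \<Rightarrow> ('m \<Rightarrow> real) \<Rightarrow> ('m \<Rightarrow> 't measure) \<Rightarrow> 't measure" where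
  "mixture Th M w P =
     measure_of (space Th) (sets Th) (\<lambda>A. \<integral>\<^sup>+ m. ennreal (w m) * emeasure (P m) A \<partial>count_space M)"

definition posterior :: "'t measure \<Rightarrow> ('t \<Rightarrow> 'l) \<Rightarrow> ('l \<Rightarrow> 'y \<Rightarrow> real) \<Rightarrow> 'y \<Rightarrow> 't measure" where
  "posterior Pr T q y =
     density Pr (\<lambda>\<theta>. ennreal (q (T \<theta>) y) / (\<integral>\<^sup>+ t. ennreal (q (T t) y) \<partial>Pr))"

text \<open>Variational objective
  E(Xi, Pi, q, Y) = - integral log q(T theta, Y) dXi(theta) + KL(Xi, Pi),
  with log 0 = minus infinity; the integral is taken in the extended sense
  (positive part minus negative part).\<close>
definition vb_obj :: "'t measure \<Rightarrow> 't measure \<Rightarrow> ('t \<Rightarrow> 'l) \<Rightarrow> ('l \<Rightarrow> 'y \<Rightarrow> real) \<Rightarrow> 'y \<Rightarrow> ereal" where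
  "vb_obj Xi Pr T q y =
     - (enn2ereal (\<integral>\<^sup>+ \<theta>. ennreal (max 0 (ln (q (T \<theta>) y))) \<partial>Xi)
        - enn2ereal (\<integral>\<^sup>+ \<theta>. (if q (T \<theta>) y = 0 then \<infinity> else ennreal (max 0 (- ln (q (T \<theta>) y)))) \<partial>Xi))
     + KL Xi Pr"

end

theory Submission
  imports Defs
begin

(* The weight gamma_m is the mass that the variational mixture puts on the cell Theta_m,
   so the left-hand side is the l1 distance between the cell masses of the variational
   mixture and of the posterior, which is at most twice their total variation distance;
   Pinsker's inequality then gives the bound.  Pinsker's inequality for a single event B follows from the Donsker-Varadhan
   bound  integral h dP <= KL(P,Q)  for every h with  integral exp h dQ <= 1  (pointwise,
   this is ln x >= s + 1 - exp s / x with x = dP/dQ), applied to the tilt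
   h = l 1_B - ln E_Q exp (l 1_B) and combined with Hoeffding's lemma for the Bernoulli
   variable 1_B. *)

lemma ln_ge_add_one_minus_exp_div:
  fixes x s :: real
  assumes "x > 0"
  shows "s + 1 - exp s / x \<le> ln x"
  using ln_le_minus_one[of "exp s / x"] assms by (simp add: ln_div)

lemma ln_bernoulli_mgf_le:
  fixes l r :: real
  assumes "0 \<le> r" "r \<le> 1"
  shows "ln (1 + r * (exp l - 1)) \<le> l * r + l\<^sup>2 / 8"
proof (cases "l \<ge> 0")
  case True
  then show ?thesis using Hoeffdings_lemma_aux[OF True assms(1)] by simp
next
  case False
  define c where "c = 1 + (1 - r) * (exp (- l) - 1)"
  \<comment> \<open>the complementary event, for which the exponent \<open>- l\<close> is nonnegative\<close>
  have "1 + r * (exp l - 1) = exp l * c"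
    unfolding c_def by (simp add: algebra_simps flip: exp_add)
  moreover have "c > 0"
    unfolding c_def using assms False by (simp add: add_pos_nonneg)
  moreover have "l * (1 - r) + ln c \<le> l\<^sup>2 / 8"
    using Hoeffdings_lemma_aux[of "- l" "1 - r"] False assms by (simp add: c_def)
  ultimately show ?thesis by (simp add: ln_mult algebra_simps)
qed

lemma AE_RN_deriv_pos:
  assumes "prob_space P" "prob_space Q" "sets P = sets Q" "absolutely_continuous Q P"
  shows "AE x in P. 0 < enn2real (RN_deriv Q P x)"
proof -
  interpret P: prob_space P by fact
  interpret Q: prob_space Q by fact
  have "AE x in Q. RN_deriv Q P x \<noteq> \<infinity>"
    using Q.RN_deriv_finite[OF P.sigma_finite_measure_axioms assms(4,3)] .
  then have "AE x in density Q (RN_deriv Q P). 0 < enn2real (RN_deriv Q P x)"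
    by (subst AE_density) (auto elim!: eventually_mono simp: enn2real_positive_iff less_top)
  then show ?thesis
    by (simp only: Q.density_RN_deriv[OF assms(4,3)])
qed

lemma integral_le_KL_of_AE_le_ln_RN_deriv:
  assumes sets: "sets P = sets Q" and ac: "absolutely_continuous Q P"
    and k: "integrable P k"
    and k_le: "AE x in P. 0 < enn2real (RN_deriv Q P x) \<and> k x \<le> ln (enn2real (RN_deriv Q P x))"
  shows "ereal (integral\<^sup>L P k) \<le> KL P Q"
proof -
  define g where "g x = enn2real (RN_deriv Q P x)" for x
  have [measurable]: "g \<in> borel_measurable P"
    unfolding g_def by (subst measurable_cong_sets[OF sets refl]) simp
  define a where "a = (\<integral>\<^sup>+ x. ennreal (ln (g x)) \<partial>P)"
  define b where "b = (\<integral>\<^sup>+ x. ennreal (- ln (g x)) \<partial>P)"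
  have KL_eq: "KL P Q = enn2ereal a - enn2ereal b"
  proof -
    have "KL P Q = enn2ereal (\<integral>\<^sup>+ x. ennreal (max 0 (ln (g x))) \<partial>P)
        - enn2ereal (\<integral>\<^sup>+ x. (if RN_deriv Q P x = 0 then \<infinity> else ennreal (max 0 (- ln (g x)))) \<partial>P)"
      using sets ac unfolding KL_def g_def by (simp add: Let_def)
    also have "(\<integral>\<^sup>+ x. ennreal (max 0 (ln (g x))) \<partial>P) = a"
      unfolding a_def by (intro nn_integral_cong) (simp add: max_def ennreal_neg)
    also have "(\<integral>\<^sup>+ x. (if RN_deriv Q P x = 0 then \<infinity> else ennreal (max 0 (- ln (g x)))) \<partial>P) = b"
      unfolding b_def using k_le
      by (intro nn_integral_cong_AE, eventually_elim) (auto simp: g_def max_def ennreal_neg)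
    finally show ?thesis .
  qed
  have b_finite: "b < \<infinity>"
  proof -
    have "AE x in P. ennreal (- ln (g x)) \<le> ennreal (norm (k x))"
      using k_le by eventually_elim (auto intro!: ennreal_leI simp: g_def)
    then have "b \<le> (\<integral>\<^sup>+ x. ennreal (norm (k x)) \<partial>P)"
      unfolding b_def by (rule nn_integral_mono_AE)
    also have "\<dots> < \<infinity>"
      using k unfolding integrable_iff_bounded by simp
    finally show ?thesis .
  qed
  show ?thesis
  proof (cases "a = \<infinity>")
    case True
    then show ?thesis using b_finite by (simp add: KL_eq)
  next
    case False
    have ln_g: "integrable P (\<lambda>x. ln (g x))"
      unfolding integrable_iff_bounded
    proof
      have "(\<integral>\<^sup>+ x. ennreal (norm (ln (g x))) \<partial>P) = (\<integral>\<^sup>+ x. ennreal (ln (g x)) + ennreal (- ln (g x)) \<partial>P)"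
        by (intro nn_integral_cong) (auto simp: ennreal_neg abs_real_def)
      also have "\<dots> = a + b"
        unfolding a_def b_def by (rule nn_integral_add) auto
      finally show "(\<integral>\<^sup>+ x. ennreal (norm (ln (g x))) \<partial>P) < \<infinity>"
        using False b_finite by (simp add: less_top)
    qed simp
    obtain ra rb where ab: "a = ennreal ra" "b = ennreal rb" "0 \<le> ra" "0 \<le> rb"
      using False b_finite by (cases a; cases b) auto
    then have "KL P Q = ereal (enn2real a - enn2real b)"
      by (simp add: KL_eq)
    also have "enn2real a - enn2real b = integral\<^sup>L P (\<lambda>x. ln (g x))"
      unfolding a_def b_def by (rule real_lebesgue_integral_def[OF ln_g, symmetric])
    also have "integral\<^sup>L P k \<le> integral\<^sup>L P (\<lambda>x. ln (g x))"
      using k ln_g k_le by (intro integral_mono_AE) (auto elim!: eventually_mono simp: g_def)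
    ultimately show ?thesis by simp
  qed
qed

text \<open>This holds also where the derivative is \<open>0\<close> or \<open>\<infinity>\<close>, by the junk values
  \<open>x / 0 = 0\<close> and \<open>enn2real \<infinity> = 0\<close>.\<close>

lemma RN_deriv_mult_exp_div_le:
  "RN_deriv Q P x * ennreal (exp c / enn2real (RN_deriv Q P x)) \<le> ennreal (exp c)"
proof (cases "RN_deriv Q P x" rule: ennreal_cases)
  case (real r)
  then show ?thesis
    by (cases "r = 0") (simp_all flip: ennreal_mult)
qed simp

lemma integral_le_KL_of_nn_integral_exp_le_1:
  assumes P: "prob_space P" and Q: "prob_space Q" and sets: "sets P = sets Q"
    and h_meas: "h \<in> borel_measurable Q" and h: "integrable P h"
    and exp_h: "(\<integral>\<^sup>+ x. ennreal (exp (h x)) \<partial>Q) \<le> 1"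
  shows "ereal (integral\<^sup>L P h) \<le> KL P Q"
proof (cases "absolutely_continuous Q P")
  case False
  then show ?thesis by (simp add: KL_def)
next
  case ac: True
  interpret P: prob_space P by fact
  interpret Q: prob_space Q by fact
  define g where "g x = enn2real (RN_deriv Q P x)" for x
  define u where "u x = exp (h x) / g x" for x
  have [measurable]: "u \<in> borel_measurable Q"
    unfolding u_def g_def using h_meas by simp
  then have u_meas[measurable]: "u \<in> borel_measurable P"
    by (subst measurable_cong_sets[OF sets refl])
  have u_nonneg: "0 \<le> u x" for x
    unfolding u_def g_def by simp
  have "(\<integral>\<^sup>+ x. ennreal (u x) \<partial>P) = (\<integral>\<^sup>+ x. RN_deriv Q P x * ennreal (u x) \<partial>Q)"
    by (subst (1) Q.density_RN_deriv[OF ac sets, symmetric]) (simp add: nn_integral_density)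
  also have "\<dots> \<le> (\<integral>\<^sup>+ x. ennreal (exp (h x)) \<partial>Q)"
    unfolding u_def g_def by (intro nn_integral_mono RN_deriv_mult_exp_div_le)
  finally have nn_u: "(\<integral>\<^sup>+ x. ennreal (u x) \<partial>P) \<le> 1"
    using exp_h by simp
  then have u: "integrable P u"
    using u_nonneg by (intro integrableI_nonneg) (auto intro: le_less_trans)
  have "integral\<^sup>L P u \<le> 1"
    using nn_u u_nonneg by (subst integral_eq_nn_integral) (auto intro: enn2real_leI)
  define k where "k x = h x + 1 - u x" for x
  have k: "integrable P k"
    unfolding k_def using h u by simp
  have "integral\<^sup>L P h \<le> integral\<^sup>L P k"
    unfolding k_def using h u \<open>integral\<^sup>L P u \<le> 1\<close> by (simp add: P.prob_space)
  moreover have "AE x in P. 0 < g x \<and> k x \<le> ln (g x)"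
    using AE_RN_deriv_pos[OF P Q sets ac]
    by eventually_elim (simp add: g_def k_def u_def ln_ge_add_one_minus_exp_div)
  then have "ereal (integral\<^sup>L P k) \<le> KL P Q"
    unfolding g_def by (rule integral_le_KL_of_AE_le_ln_RN_deriv[OF sets ac k])
  ultimately show ?thesis
    by (meson ereal_less_eq(3) order_trans)
qed

lemma measure_diff_sq_le_KL:
  assumes P: "prob_space P" and Q: "prob_space Q" and sets: "sets P = sets Q"
    and B: "B \<in> sets Q"
  shows "ereal (2 * (measure P B - measure Q B)\<^sup>2) \<le> KL P Q"
proof -
  interpret P: prob_space P by fact
  interpret Q: prob_space Q by fact
  define p where "p = measure P B"
  define r where "r = measure Q B"
  \<comment> \<open>\<open>l = 4 (p - r)\<close> maximises the resulting lower bound \<open>l (p - r) - l\<^sup>2 / 8\<close>\<close>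
  define l where "l = 4 * (p - r)"
  define Z where "Z = 1 + r * (exp l - 1)"
  have r: "0 \<le> r" "r \<le> 1"
    unfolding r_def by simp_all
  have "Z = (1 - r) + r * exp l"
    by (simp add: Z_def algebra_simps)
  also have "\<dots> > 0"
    using r by (cases "r = 0") (auto intro!: add_nonneg_pos)
  finally have "Z > 0" .
  define h where "h x = l * indicator B x - ln Z" for x
  have h_meas: "h \<in> borel_measurable Q"
    unfolding h_def using B by simp
  have exp_h: "exp (h x) = 1 / Z + (exp l - 1) / Z * indicator B x" for x
    unfolding h_def using \<open>Z > 0\<close> by (simp add: exp_diff indicator_def diff_divide_distrib)
  have B_Int: "B \<inter> space Q = B" "B \<inter> space P = B"
    using sets.sets_into_space[OF B] sets_eq_imp_space_eq[OF sets] by auto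
  have ind_Q: "integrable Q (indicator B :: _ \<Rightarrow> real)"
    using B by (simp add: Q.emeasure_finite less_top[symmetric])
  have ind_P: "integrable P (indicator B :: _ \<Rightarrow> real)"
    using B sets by (simp add: P.emeasure_finite less_top[symmetric])
  have "integrable Q (\<lambda>x. exp (h x))"
    unfolding exp_h using ind_Q by simp
  then have "(\<integral>\<^sup>+ x. ennreal (exp (h x)) \<partial>Q) = ennreal (\<integral>x. exp (h x) \<partial>Q)"
    by (intro nn_integral_eq_integral) auto
  also have "(\<integral>x. exp (h x) \<partial>Q) = 1 / Z + (exp l - 1) / Z * r"
    using ind_Q unfolding exp_h by (simp add: r_def Q.prob_space B_Int)
  also have "\<dots> = 1"
    using \<open>Z > 0\<close> by (simp add: Z_def field_simps)
  finally have KL_ge: "ereal (\<integral>x. h x \<partial>P) \<le> KL P Q"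
    using ind_P unfolding h_def
    by (intro integral_le_KL_of_nn_integral_exp_le_1[OF P Q sets h_meas[unfolded h_def]]) simp_all
  have "(\<integral>x. h x \<partial>P) = l * p - ln Z"
    using ind_P unfolding h_def by (simp add: p_def P.prob_space B_Int)
  moreover have "ln Z \<le> l * r + l\<^sup>2 / 8"
    unfolding Z_def using r by (rule ln_bernoulli_mgf_le)
  moreover have "l * p - (l * r + l\<^sup>2 / 8) = 2 * (p - r)\<^sup>2"
    unfolding l_def by (simp add: power2_eq_square field_simps)
  ultimately have "ereal (2 * (p - r)\<^sup>2) \<le> ereal (\<integral>x. h x \<partial>P)"
    by simp
  then show ?thesis
    unfolding p_def r_def using KL_ge by (rule order_trans)
qed

lemma sum_abs_measure_diff_le:
  assumes P: "finite_measure P" and Q: "finite_measure Q" and sets: "sets P = sets Q"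
    and F: "finite F" and disj: "disjoint_family_on A F" and A: "A ` F \<subseteq> sets P"
    and c: "\<And>B. B \<in> sets P \<Longrightarrow> \<bar>measure P B - measure Q B\<bar> \<le> c"
  shows "(\<Sum>m\<in>F. \<bar>measure P (A m) - measure Q (A m)\<bar>) \<le> 2 * c"
proof -
  define D where "D B = measure P B - measure Q B" for B
  have D_Union: "D (\<Union>m\<in>G. A m) = (\<Sum>m\<in>G. D (A m))" if "G \<subseteq> F" for G
  proof -
    have G: "finite G" "A ` G \<subseteq> sets P" "disjoint_family_on A G"
      using that F A disj by (auto intro: finite_subset disjoint_family_on_mono)
    show ?thesis
      using finite_measure.finite_measure_finite_Union[OF P G]
        finite_measure.finite_measure_finite_Union[OF Q G[unfolded sets]]
      by (simp add: D_def sum_subtractf)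
  qed
  have D_le: "\<bar>D (\<Union>m\<in>G. A m)\<bar> \<le> c" if "G \<subseteq> F" for G
    unfolding D_def using that F A by (intro c sets.finite_UN) (auto intro: finite_subset)
  define F1 where "F1 = {m \<in> F. D (A m) \<ge> 0}"
  have "(\<Sum>m\<in>F. \<bar>D (A m)\<bar>) = (\<Sum>m\<in>F1. D (A m)) - (\<Sum>m\<in>F - F1. D (A m))"
    using F sum.subset_diff[of F1 F "\<lambda>m. \<bar>D (A m)\<bar>"]
    by (auto simp: F1_def sum_negf[symmetric] intro!: sum.cong)
  also have "\<dots> = D (\<Union>m\<in>F1. A m) - D (\<Union>m\<in>F - F1. A m)"
    by (simp add: D_Union F1_def)
  also have "\<dots> \<le> 2 * c"
    using D_le[of F1] D_le[of "F - F1"] by (auto simp: F1_def)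
  finally show ?thesis
    by (simp add: D_def)
qed

lemma infsum_abs_measure_diff_le:
  assumes P: "finite_measure P" and Q: "finite_measure Q" and sets: "sets P = sets Q"
    and disj: "disjoint_family_on A M" and A: "A ` M \<subseteq> sets P"
    and c: "\<And>B. B \<in> sets P \<Longrightarrow> \<bar>measure P B - measure Q B\<bar> \<le> c"
  shows "(\<Sum>\<^sub>\<infinity>m\<in>M. \<bar>measure P (A m) - measure Q (A m)\<bar>) \<le> 2 * c"
proof (rule infsum_le_finite_sums)
  have partial_sums: "(\<Sum>m\<in>F. \<bar>measure P (A m) - measure Q (A m)\<bar>) \<le> 2 * c"
    if "finite F" "F \<subseteq> M" for F
    using that disj A by (intro sum_abs_measure_diff_le[OF P Q sets _ _ _ c]) (auto intro: disjoint_family_on_mono)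
  then show "(\<lambda>m. \<bar>measure P (A m) - measure Q (A m)\<bar>) summable_on M"
    by (intro nonneg_bounded_partial_sums_imp_summable_on) (auto intro!: eventually_finite_subsets_at_top_weakI)
  show "\<And>F. finite F \<Longrightarrow> F \<subseteq> M \<Longrightarrow> (\<Sum>m\<in>F. \<bar>measure P (A m) - measure Q (A m)\<bar>) \<le> 2 * c"
    by (fact partial_sums)
qed

lemma infsum_abs_measure_diff_sq_le_KL:
  assumes P: "prob_space P" and Q: "prob_space Q" and sets: "sets P = sets Q"
    and disj: "disjoint_family_on A M" and A: "A ` M \<subseteq> sets P"
  shows "ereal ((\<Sum>\<^sub>\<infinity>m\<in>M. \<bar>measure P (A m) - measure Q (A m)\<bar>)\<^sup>2) \<le> 2 * KL P Q"
proof -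
  have Pinsker: "ereal (2 * (measure P B - measure Q B)\<^sup>2) \<le> KL P Q" if "B \<in> sets P" for B
    using that sets by (intro measure_diff_sq_le_KL[OF P Q sets]) simp
  from Pinsker[of "{}"] have "0 \<le> KL P Q"
    by (simp add: zero_ereal_def)
  then consider "KL P Q = \<infinity>" | \<kappa> where "KL P Q = ereal \<kappa>" "0 \<le> \<kappa>"
    by (cases "KL P Q") auto
  then show ?thesis
  proof cases
    case (2 \<kappa>)
    have "\<bar>measure P B - measure Q B\<bar> \<le> sqrt (\<kappa> / 2)" if "B \<in> sets P" for B
      using Pinsker[OF that] 2 by (intro real_le_rsqrt) (simp add: power2_abs)
    then have "(\<Sum>\<^sub>\<infinity>m\<in>M. \<bar>measure P (A m) - measure Q (A m)\<bar>) \<le> 2 * sqrt (\<kappa> / 2)"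
      using P Q by (intro infsum_abs_measure_diff_le[OF _ _ sets disj A]) (auto simp: prob_space_def)
    moreover have "0 \<le> (\<Sum>\<^sub>\<infinity>m\<in>M. \<bar>measure P (A m) - measure Q (A m)\<bar>)"
      by (simp add: infsum_nonneg)
    ultimately have "(\<Sum>\<^sub>\<infinity>m\<in>M. \<bar>measure P (A m) - measure Q (A m)\<bar>)\<^sup>2 \<le> (2 * sqrt (\<kappa> / 2))\<^sup>2"
      by (rule power_mono)
    also have "\<dots> = 2 * \<kappa>"
      using \<open>0 \<le> \<kappa>\<close> by (simp add: power_mult_distrib)
    finally show ?thesis
      using 2 by simp
  qed simp
qed

lemma sets_mixture [simp]: "sets (mixture Th M w P) = sets Th"
  unfolding mixture_def by (simp add: sets.sigma_sets_eq sets.space_closed)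

lemma space_mixture [simp]: "space (mixture Th M w P) = space Th"
  using sets_eq_imp_space_eq[OF sets_mixture] .

lemma emeasure_mixture:
  assumes sets_P: "\<And>m. m \<in> M \<Longrightarrow> sets (P m) = sets Th" and A: "A \<in> sets Th"
  shows "emeasure (mixture Th M w P) A = (\<integral>\<^sup>+ m. ennreal (w m) * emeasure (P m) A \<partial>count_space M)"
  unfolding mixture_def
proof (rule emeasure_measure_of_sigma[OF sets.sigma_algebra_axioms _ _ A])
  show "positive (sets Th) (\<lambda>A. \<integral>\<^sup>+ m. ennreal (w m) * emeasure (P m) A \<partial>count_space M)"
    unfolding positive_def by simp
  show "countably_additive (sets Th) (\<lambda>A. \<integral>\<^sup>+ m. ennreal (w m) * emeasure (P m) A \<partial>count_space M)"
    unfolding countably_additive_def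
  proof (intro allI impI)
    fix F :: "nat \<Rightarrow> _"
    assume F: "range F \<subseteq> sets Th" "disjoint_family F" "\<Union> (range F) \<in> sets Th"
    have "(\<Sum>i. \<integral>\<^sup>+ m. ennreal (w m) * emeasure (P m) (F i) \<partial>count_space M)
        = (\<integral>\<^sup>+ m. (\<Sum>i. ennreal (w m) * emeasure (P m) (F i)) \<partial>count_space M)"
      by (rule nn_integral_suminf[symmetric]) simp
    also have "\<dots> = (\<integral>\<^sup>+ m. ennreal (w m) * emeasure (P m) (\<Union> (range F)) \<partial>count_space M)"
      using F sets_P by (intro nn_integral_cong) (simp add: ennreal_suminf_cmult suminf_emeasure)
    finally show "(\<Sum>i. \<integral>\<^sup>+ m. ennreal (w m) * emeasure (P m) (F i) \<partial>count_space M)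
        = (\<integral>\<^sup>+ m. ennreal (w m) * emeasure (P m) (\<Union> (range F)) \<partial>count_space M)" .
  qed
qed

lemma nn_integral_count_space_has_sum:
  fixes w :: "'m \<Rightarrow> real"
  assumes nonneg: "\<And>m. m \<in> M \<Longrightarrow> 0 \<le> w m" and sum: "(w has_sum s) M"
  shows "(\<integral>\<^sup>+ m. ennreal (w m) \<partial>count_space M) = ennreal s"
proof -
  have "(\<lambda>m. norm (w m)) summable_on M"
    using sum nonneg by (subst summable_on_cong[where g = w]) (auto simp: summable_on_def)
  then have abs: "Infinite_Set_Sum.abs_summable_on w M"
    using abs_summable_equivalent by blast
  have "(\<integral>\<^sup>+ m. ennreal (w m) \<partial>count_space M) = ennreal (infsetsum w M)"
    by (rule nn_integral_conv_infsetsum[OF abs nonneg])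
  also have "infsetsum w M = s"
    using infsetsum_infsum[OF abs] sum by (simp add: infsumI)
  finally show ?thesis .
qed

lemma prob_space_mixture:
  fixes w :: "'m \<Rightarrow> real"
  assumes nonneg: "\<And>m. m \<in> M \<Longrightarrow> 0 \<le> w m" and sum: "(w has_sum 1) M"
    and P: "\<And>m. m \<in> M \<Longrightarrow> prob_space (P m) \<and> sets (P m) = sets Th"
  shows "prob_space (mixture Th M w P)"
proof
  have "emeasure (mixture Th M w P) (space Th) = (\<integral>\<^sup>+ m. ennreal (w m) * emeasure (P m) (space Th) \<partial>count_space M)"
    using P by (intro emeasure_mixture) auto
  also have "\<dots> = (\<integral>\<^sup>+ m. ennreal (w m) \<partial>count_space M)"
    using P by (intro nn_integral_cong) (metis prob_space.emeasure_space_1 sets_eq_imp_space_eq mult_1_right space_count_space)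
  also have "\<dots> = 1"
    using nn_integral_count_space_has_sum[OF nonneg sum] by simp
  finally show "emeasure (mixture Th M w P) (space (mixture Th M w P)) = 1"
    by simp
qed

lemma emeasure_mixture_cell:
  assumes P: "\<And>m. m \<in> M \<Longrightarrow> prob_space (P m) \<and> sets (P m) = sets Th \<and> emeasure (P m) (C m) = 1"
    and disj: "disjoint_family_on C M" and C: "\<And>m. m \<in> M \<Longrightarrow> C m \<in> sets Th"
    and k: "k \<in> M" and w: "0 \<le> w k"
  shows "emeasure (mixture Th M w P) (C k) = ennreal (w k)"
proof -
  have other_cells: "emeasure (P m) (C k) = 0" if m: "m \<in> M" "m \<noteq> k" for m
  proof -
    interpret prob_space "P m"
      using P m by blast
    have sets: "C k \<in> events" "C m \<in> events"
      using P C k m by auto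
    have "C k \<inter> C m = {}"
      using disj k m unfolding disjoint_family_on_def by blast
    then have "prob (C k) + prob (C m) \<le> 1"
      using finite_measure_Union[OF sets] prob_le_1[of "C k \<union> C m"] by linarith
    moreover have "prob (C m) = 1"
      using P[OF m(1)] by (simp add: emeasure_eq_measure)
    ultimately show ?thesis
      using measure_nonneg[of "P m" "C k"] by (simp add: emeasure_eq_measure)
  qed
  have "emeasure (mixture Th M w P) (C k) = (\<integral>\<^sup>+ m. ennreal (w m) * emeasure (P m) (C k) \<partial>count_space M)"
    using P C k by (intro emeasure_mixture) auto
  also have "\<dots> = (\<integral>\<^sup>+ m. ennreal (w k) * indicator {k} m \<partial>count_space M)"
    using P[OF k] other_cells by (intro nn_integral_cong) (auto split: split_indicator)
  also have "\<dots> = ennreal (w k)"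
    using k by (simp add: nn_integral_cmult_indicator)
  finally show ?thesis .
qed

lemma sets_posterior [simp]: "sets (posterior Pr T q y) = sets Pr"
  by (simp add: posterior_def)

lemma prob_space_posterior:
  assumes [measurable]: "(\<lambda>\<theta>. q (T \<theta>) y) \<in> borel_measurable Pr"
    and "0 < (\<integral>\<^sup>+ \<theta>. ennreal (q (T \<theta>) y) \<partial>Pr)" "(\<integral>\<^sup>+ \<theta>. ennreal (q (T \<theta>) y) \<partial>Pr) < \<infinity>"
  shows "prob_space (posterior Pr T q y)"
proof
  define Z where "Z = (\<integral>\<^sup>+ \<theta>. ennreal (q (T \<theta>) y) \<partial>Pr)"
  have "emeasure (posterior Pr T q y) (space Pr) = (\<integral>\<^sup>+ \<theta>. ennreal (q (T \<theta>) y) / Z \<partial>Pr)"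
    unfolding posterior_def Z_def by (subst emeasure_density) (auto intro!: nn_integral_cong)
  also have "\<dots> = Z / Z"
    unfolding Z_def by (simp add: nn_integral_divide)
  also have "\<dots> = 1"
    using assms unfolding Z_def by (simp add: ennreal_divide_self)
  finally show "emeasure (posterior Pr T q y) (space (posterior Pr T q y)) = 1"
    by (simp add: posterior_def)
qed

lemma has_sum_pos:
  fixes f :: "'a \<Rightarrow> real"
  assumes sum: "(f has_sum s) M" and nonneg: "\<And>m. m \<in> M \<Longrightarrow> 0 \<le> f m"
    and k: "k \<in> M" "0 < f k"
  shows "0 < s"
proof -
  have "f k \<le> s"
    using has_sum_mono_neutral[OF has_sum_finite[of "{k}" f] sum] k nonneg by auto
  with k show ?thesis
    by simp
qed

lemma has_sum_normalized_weights:
  fixes \<alpha> c :: "'m \<Rightarrow> real"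
  assumes \<alpha>_nonneg: "\<And>m. m \<in> M \<Longrightarrow> 0 \<le> \<alpha> m" and \<alpha>_sum: "(\<alpha> has_sum 1) M"
    and c_pos: "\<And>m. m \<in> M \<Longrightarrow> 0 < c m" and S: "((\<lambda>m. \<alpha> m * c m) has_sum S) M"
  shows "0 < S" and "((\<lambda>m. \<alpha> m * c m / S) has_sum 1) M"
proof -
  obtain k where "k \<in> M" "0 < \<alpha> k"
    using \<alpha>_sum \<alpha>_nonneg has_sum_0[of M \<alpha>] has_sum_unique
    by (metis less_eq_real_def zero_neq_one)
  then show "0 < S"
    using \<alpha>_nonneg c_pos by (intro has_sum_pos[OF S, of k]) (auto intro: mult_nonneg_nonneg less_imp_le)
  then show "((\<lambda>m. \<alpha> m * c m / S) has_sum 1) M"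
    using has_sum_divide_const[OF S, of S] by simp
qed

theorem proposition2p2:
  fixes Th :: "'t measure" and Lam :: "'l measure" and mu :: "'y measure"
    and q :: "'l \<Rightarrow> 'y \<Rightarrow> real" and y :: 'y
    and M :: "'m set" and Thm :: "'m \<Rightarrow> 't set" and T :: "'t \<Rightarrow> 'l"
    and \<alpha> :: "'m \<Rightarrow> real" and Pm :: "'m \<Rightarrow> 't measure"
    and V :: "'m \<Rightarrow> 't measure set" and Xh :: "'m \<Rightarrow> 't measure"
    and e :: "'m \<Rightarrow> real" and S :: real and \<gamma> :: "'m \<Rightarrow> real"
  assumes mu_sf: "sigma_finite_measure mu"
    and q_meas: "(\<lambda>(l, z). q l z) \<in> borel_measurable (Lam \<Otimes>\<^sub>M mu)"
    and q_nonneg: "\<And>l z. l \<in> space Lam \<Longrightarrow> z \<in> space mu \<Longrightarrow> q l z \<ge> 0"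
    and q_dens: "\<And>l. l \<in> space Lam \<Longrightarrow> (\<integral>\<^sup>+ z. ennreal (q l z) \<partial>mu) = 1"
    and y_in: "y \<in> space mu"
    and M_count: "countable M"
    and disj: "disjoint_family_on Thm M"
    and Thm_sets: "\<And>m. m \<in> M \<Longrightarrow> Thm m \<in> sets Th"
    and space_Th: "space Th = (\<Union>m\<in>M. Thm m)"
    and T_meas: "T \<in> Th \<rightarrow>\<^sub>M Lam"
    and \<alpha>_nonneg: "\<And>m. m \<in> M \<Longrightarrow> \<alpha> m \<ge> 0"
    and \<alpha>_sum: "(\<alpha> has_sum 1) M"
    and Pm_prob: "\<And>m. m \<in> M \<Longrightarrow> prob_space (Pm m) \<and> sets (Pm m) = sets Th
                                     \<and> emeasure (Pm m) (Thm m) = 1"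
    and V_prob: "\<And>m X. m \<in> M \<Longrightarrow> X \<in> V m \<Longrightarrow>
                   prob_space X \<and> sets X = sets Th \<and> emeasure X (Thm m) = 1"
    and post_norm: "0 < (\<integral>\<^sup>+ \<theta>. ennreal (q (T \<theta>) y) \<partial>mixture Th M \<alpha> Pm)"
                   "(\<integral>\<^sup>+ \<theta>. ennreal (q (T \<theta>) y) \<partial>mixture Th M \<alpha> Pm) < \<infinity>"
    and Xh_in: "\<And>m. m \<in> M \<Longrightarrow> Xh m \<in> V m"
    and Xh_min: "\<And>m X. m \<in> M \<Longrightarrow> X \<in> V m \<Longrightarrow> vb_obj (Xh m) (Pm m) T q y \<le> vb_obj X (Pm m) T q y"
    and e_def: "\<And>m. m \<in> M \<Longrightarrow> vb_obj (Xh m) (Pm m) T q y = ereal (e m)"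
    and S_def: "((\<lambda>m. \<alpha> m * exp (- e m)) has_sum S) M"
    and \<gamma>_def: "\<And>m. m \<in> M \<Longrightarrow> \<gamma> m = \<alpha> m * exp (- e m) / S"
  shows "ereal ((\<Sum>\<^sub>\<infinity> m\<in>M. \<bar>\<gamma> m - measure (posterior (mixture Th M \<alpha> Pm) T q y) (Thm m)\<bar>) ^ 2)
           \<le> 2 * KL (mixture Th M \<gamma> Xh) (posterior (mixture Th M \<alpha> Pm) T q y)"
proof -
  define P where "P = mixture Th M \<gamma> Xh"
  define Q where "Q = posterior (mixture Th M \<alpha> Pm) T q y"
  have "0 < S" and \<gamma>_sum: "(\<gamma> has_sum 1) M"
    using has_sum_normalized_weights[OF \<alpha>_nonneg \<alpha>_sum _ S_def] \<gamma>_def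
    by (simp_all add: has_sum_cong[of M \<gamma>])
  then have \<gamma>_nonneg: "\<And>m. m \<in> M \<Longrightarrow> 0 \<le> \<gamma> m"
    using \<gamma>_def \<alpha>_nonneg by simp
  have qT_meas: "(\<lambda>\<theta>. q (T \<theta>) y) \<in> borel_measurable (mixture Th M \<alpha> Pm)"
    using measurable_comp[OF measurable_Pair[OF T_meas measurable_const[OF y_in]] q_meas]
    by (simp add: comp_def cong: measurable_cong_sets)
  have "prob_space P"
    unfolding P_def using V_prob Xh_in by (intro prob_space_mixture[OF \<gamma>_nonneg \<gamma>_sum]) auto
  moreover have "prob_space Q"
    unfolding Q_def using post_norm by (intro prob_space_posterior[where q = q and T = T and y = y, OF qT_meas])
  moreover have "measure P (Thm m) = \<gamma> m" if "m \<in> M" for m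
    unfolding P_def measure_def using V_prob Xh_in that \<gamma>_nonneg
    by (subst emeasure_mixture_cell[OF _ disj Thm_sets]) auto
  ultimately show ?thesis
    using infsum_abs_measure_diff_sq_le_KL[of P Q Thm M] disj Thm_sets
    by (simp add: P_def Q_def image_subset_iff cong: infsum_cong)
qed

end
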